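(* Let $n,k\in\mathbb{N}$ with at least one of $n,k$ nonzero. Then $T(n,\omega\cdot k)\le k^{n}$.
   Context: $\mathbb{N}=\{0,1,2,\dots\}$ and $[c]=\{1,\dots,c\}$. Each ordinal $\alpha$ is identified with the linearly ordered set of ordinals $\beta<\alpha$; $\omega$ is the order type of $\mathbb{N}$, and $\omega\cdot k$ is the ordinal obtained by concatenating $k$ copies of $\omega$ (its elements are $\omega\cdot b+a$ with $0\le b<k$, $a\in\mathbb{N}$). For a set $S$, $\binom{S}{n}$ denotes the set of $n$-element subsets of $S$. Two linearly ordered sets are order-equivalent ($\approx$) if there is an order-preserving bijection between them. For a linearly ordered set $S$ and $n\in\mathbb{N}$, the big Ramsey degree $T(n,S)$ is the least $t\in\mathbb{N}$ such that for every $c\ge 1$ and every coloring $\mathrm{COL}:\binom{S}{n}\to[c]$ there exists $S'\subseteq S$ with $S'\approx S$ and $|\mathrm{COL}(\binom{S'}{n})|\le t$; if no such $t$ exists, $T(n,S)=\infty$. *)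

theory Defs
  imports Main "HOL-Library.Ramsey" "HOL-Library.Product_Lexorder" "HOL-Library.Extended_Nat"
begin

definition order_equiv :: "'a::linorder set \<Rightarrow> 'b::linorder set \<Rightarrow> bool" where
  "order_equiv A B \<longleftrightarrow> (\<exists>f. bij_betw f A B \<and> strict_mono_on A f)"

definition big_ramsey_bound :: "nat \<Rightarrow> 'a::linorder set \<Rightarrow> nat \<Rightarrow> bool" where
  "big_ramsey_bound n S t \<longleftrightarrow>
     (\<forall>c::nat. c \<ge> 1 \<longrightarrow> (\<forall>COL :: 'a set \<Rightarrow> nat. COL ` ([S]\<^bsup>n\<^esup>) \<subseteq> {1..c} \<longrightarrow>
        (\<exists>S'. S' \<subseteq> S \<and> order_equiv S' S \<and> card (COL ` ([S']\<^bsup>n\<^esup>)) \<le> t)))"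

definition big_ramsey_degree :: "nat \<Rightarrow> 'a::linorder set \<Rightarrow> enat" where
  "big_ramsey_degree n S =
     (if \<exists>t. big_ramsey_bound n S t then enat (LEAST t. big_ramsey_bound n S t) else \<infinity>)"

text \<open>The ordinal \<omega>\<cdot>k, realised as {(b,a). b < k} \<subseteq> nat \<times> nat with the
  lexicographic order; (b,a) stands for \<omega>\<cdot>b + a.\<close>
definition omega_times :: "nat \<Rightarrow> (nat \<times> nat) set" where
  "omega_times k = {(b, a). b < k}"

end

theory Submission
  imports Defs "HOL-Library.FuncSet"
begin

text \<open>Points of \<omega>\<cdot>k are pairs (column, a). Colour each n-set B of naturals by the vector,
  indexed by the k^n column patterns p, of the colours of the n-sets of \<omega>\<cdot>k that put the
  i-th smallest element of B into column p!i. There are finitely many such vectors, so Ramsey's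
  theorem yields an infinite M \<subseteq> \<nat> on which the vector is constant. Dealing the elements of M
  round robin to the k columns gives a copy of \<omega>\<cdot>k inside \<omega>\<cdot>k, and the colour of each of its
  n-subsets depends only on its column pattern; hence at most k^n colours occur.\<close>

lemma order_equiv_sym:
  assumes "order_equiv A B"
  shows "order_equiv B A"
proof -
  obtain f where bij: "bij_betw f A B" and mono: "strict_mono_on A f"
    using assms unfolding order_equiv_def by blast
  have "strict_mono_on B (inv_into A f)"
  proof (rule strict_mono_onI)
    fix x y assume "x \<in> B" "y \<in> B" "x < y"
    moreover have "inv_into A f x \<in> A" "inv_into A f y \<in> A"
      using \<open>x \<in> B\<close> \<open>y \<in> B\<close> bij bij_betw_inv_into bij_betw_apply by metis+
    ultimately show "inv_into A f x < inv_into A f y"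
      using bij strict_mono_on_less[OF mono] by (metis bij_betw_inv_into_right)
  qed
  then show ?thesis
    using bij_betw_inv_into[OF bij] unfolding order_equiv_def by blast
qed

lemma big_ramsey_degree_le:
  assumes "big_ramsey_bound n S t"
  shows "big_ramsey_degree n S \<le> enat t"
  using assms Least_le[of "big_ramsey_bound n S" t] by (auto simp: big_ramsey_degree_def)

lemma big_ramsey_bound_empty:
  assumes "0 < n"
  shows "big_ramsey_bound n ({} :: 'a::linorder set) t"
  using assms by (auto simp: big_ramsey_bound_def order_equiv_def nsets_empty_iff)

lemma Ramsey_nsets_simultaneous:
  fixes f :: "'p \<Rightarrow> 'a set \<Rightarrow> 'c"
  assumes Z: "infinite Z" and P: "finite P" and C: "finite C"
    and f: "\<And>p X. p \<in> P \<Longrightarrow> X \<in> [Z]\<^bsup>r\<^esup> \<Longrightarrow> f p X \<in> C"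
  obtains Y where "Y \<subseteq> Z" "infinite Y"
    "\<And>p X X'. p \<in> P \<Longrightarrow> X \<in> [Y]\<^bsup>r\<^esup> \<Longrightarrow> X' \<in> [Y]\<^bsup>r\<^esup> \<Longrightarrow> f p X = f p X'"
proof -
  define R where "R = P \<rightarrow>\<^sub>E C"
  have "finite R" using P C by (simp add: R_def finite_PiE)
  then obtain h where h: "bij_betw h R {..<card R}"
    by (metis atLeast0LessThan ex_bij_betw_finite_nat)
  define F where "F X = restrict (\<lambda>p. f p X) P" for X
  have F: "F X \<in> R" if "X \<in> [Z]\<^bsup>r\<^esup>" for X
    using f that by (simp add: F_def R_def)
  then have "(h \<circ> F) ` [Z]\<^bsup>r\<^esup> \<subseteq> {..<card R}"
    using h by (force simp: bij_betw_def)
  then obtain Y t where Y: "Y \<subseteq> Z" "infinite Y" "t < card R" "(h \<circ> F) ` [Y]\<^bsup>r\<^esup> \<subseteq> {t}"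
    by (rule Ramsey_nsets[OF Z])
  have "F X = F X'" if "X \<in> [Y]\<^bsup>r\<^esup>" "X' \<in> [Y]\<^bsup>r\<^esup>" for X X'
  proof -
    have "X \<in> [Z]\<^bsup>r\<^esup>" "X' \<in> [Z]\<^bsup>r\<^esup>"
      using that nsets_mono[OF Y(1)] by auto
    moreover have "h (F X) = h (F X')"
      using Y(4) that by auto
    ultimately show ?thesis
      using h F by (auto simp: bij_betw_def inj_on_def)
  qed
  then show thesis
    using that Y(1,2) by (metis F_def restrict_apply')
qed

lemma order_equiv_round_robin:
  fixes M :: "nat set"
  assumes M: "infinite M" and k: "0 < k"
  shows "order_equiv ((\<lambda>m. (inv (enumerate M) m mod k, m)) ` M) (omega_times k)"
proof -
  define e where "e = enumerate M"
  have e: "bij_betw e UNIV M" "inj e" "\<And>i j. e i < e j \<longleftrightarrow> i < j"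
    using bij_enumerate[OF M] M by (auto simp: e_def bij_betw_def)
  define g where "g = (\<lambda>(b, a). (b, e (k * a + b)))"
  have mono: "strict_mono_on (omega_times k) g"
    by (rule strict_mono_onI) (auto simp: g_def omega_times_def e(3))
  have "g ` omega_times k = (\<lambda>m. (inv e m mod k, m)) ` M"
  proof (intro equalityI subsetI)
    fix y assume "y \<in> g ` omega_times k"
    then obtain b a where "y = (b, e (k * a + b))" "b < k"
      by (auto simp: g_def omega_times_def)
    then show "y \<in> (\<lambda>m. (inv e m mod k, m)) ` M"
      using e(1,2) by (force simp: bij_betw_def)
  next
    fix y assume "y \<in> (\<lambda>m. (inv e m mod k, m)) ` M"
    then obtain j where "y = (j mod k, e j)"
      using e(1,2) by (auto simp: bij_betw_def)
    moreover have "g (j mod k, j div k) = (j mod k, e j)" "(j mod k, j div k) \<in> omega_times k"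
      using k by (simp_all add: g_def omega_times_def mult.commute)
    ultimately show "y \<in> g ` omega_times k" by (metis image_eqI)
  qed
  then have "bij_betw g (omega_times k) ((\<lambda>m. (inv e m mod k, m)) ` M)"
    using strict_mono_on_imp_inj_on[OF mono] by (simp add: bij_betw_def)
  then show ?thesis
    using mono order_equiv_sym unfolding order_equiv_def e_def by blast
qed

lemma zip_sorted_in_nsets_omega_times:
  fixes B :: "nat set"
  assumes p: "set p \<subseteq> {..<k}" "length p = n" and B: "B \<in> [UNIV]\<^bsup>n\<^esup>"
  shows "set (zip p (sorted_list_of_set B)) \<in> [omega_times k]\<^bsup>n\<^esup>"
proof -
  have "length (sorted_list_of_set B) = n"
    using B by (simp add: nsets_def)
  then have "card (set (zip p (sorted_list_of_set B))) = n"
    using p by (simp add: distinct_card distinct_zipI2)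
  moreover have "set (zip p (sorted_list_of_set B)) \<subseteq> omega_times k"
    using p set_zip_leftD by (fastforce simp: omega_times_def)
  ultimately show ?thesis
    by (simp add: nsets_def)
qed

lemma big_ramsey_bound_omega_times:
  fixes n k :: nat
  assumes k: "0 < k"
  shows "big_ramsey_bound n (omega_times k) (k ^ n)"
  unfolding big_ramsey_bound_def
proof (intro allI impI)
  fix c :: nat and COL :: "(nat \<times> nat) set \<Rightarrow> nat"
  assume COL: "COL ` [omega_times k]\<^bsup>n\<^esup> \<subseteq> {1..c}"
  define P where "P = {p. set p \<subseteq> {..<k} \<and> length p = n}"
  have P: "finite P" "card P = k ^ n"
    using finite_lists_length_eq card_lists_length_eq[of "{..<k}" n] by (auto simp: P_def)
  define f where "f p B = COL (set (zip p (sorted_list_of_set B)))" for p B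
  have "f p B \<in> {1..c}" if "p \<in> P" "B \<in> [UNIV]\<^bsup>n\<^esup>" for p B
    using COL zip_sorted_in_nsets_omega_times that by (fastforce simp: f_def P_def)
  then obtain M where M: "infinite M"
    and homogeneous: "\<And>p B B'. p \<in> P \<Longrightarrow> B \<in> [M]\<^bsup>n\<^esup> \<Longrightarrow> B' \<in> [M]\<^bsup>n\<^esup> \<Longrightarrow> f p B = f p B'"
    using Ramsey_nsets_simultaneous[OF infinite_UNIV_nat P(1) finite_atLeastAtMost] by metis
  obtain B0 where B0: "B0 \<in> [M]\<^bsup>n\<^esup>"
    using infinite_arbitrarily_large[OF M] by (auto simp: nsets_def)
  define column where "column m = inv (enumerate M) m mod k" for m
  define S' where "S' = (\<lambda>m. (column m, m)) ` M"
  have "COL X \<in> (\<lambda>p. f p B0) ` P" if "X \<in> [S']\<^bsup>n\<^esup>" for X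
  proof -
    obtain B where B: "B \<in> [M]\<^bsup>n\<^esup>" "X = (\<lambda>m. (column m, m)) ` B"
      using nset_image_obtains[of X "\<lambda>m. (column m, m)" M n] \<open>X \<in> [S']\<^bsup>n\<^esup>\<close>
      by (auto simp: S'_def inj_on_def)
    define p where "p = map column (sorted_list_of_set B)"
    have "finite B" "card B = n" using B(1) by (auto simp: nsets_def)
    then have "p \<in> P"
      using k by (auto simp: P_def p_def column_def)
    moreover have "COL X = f p B"
      using \<open>finite B\<close> B(2) by (simp add: f_def p_def zip_map1 zip_same_conv_map image_image)
    ultimately show ?thesis
      using homogeneous[OF _ B(1) B0] by (metis image_eqI)
  qed
  then have "card (COL ` [S']\<^bsup>n\<^esup>) \<le> card ((\<lambda>p. f p B0) ` P)"
    using P(1) by (intro card_mono) auto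
  also have "\<dots> \<le> k ^ n"
    using card_image_le[OF P(1)] P(2) by simp
  moreover have "S' \<subseteq> omega_times k"
    using k by (auto simp: S'_def omega_times_def column_def)
  moreover have "order_equiv S' (omega_times k)"
    using order_equiv_round_robin[OF M k] by (simp add: S'_def column_def)
  ultimately show "\<exists>S'. S' \<subseteq> omega_times k \<and> order_equiv S' (omega_times k) \<and>
      card (COL ` [S']\<^bsup>n\<^esup>) \<le> k ^ n"
    by auto
qed

theorem theorem5p1:
  fixes n k :: nat
  assumes "n \<noteq> 0 \<or> k \<noteq> 0"
  shows "big_ramsey_degree n (omega_times k) \<le> enat (k ^ n)"
proof (cases "k = 0")
  case True
  then have "omega_times k = {}" and "0 < n"
    using assms by (auto simp: omega_times_def)
  then show ?thesis
    using big_ramsey_bound_empty big_ramsey_degree_le by metis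
next
  case False
  then show ?thesis
    by (simp add: big_ramsey_degree_le big_ramsey_bound_omega_times)
qed

end
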